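(* Let $FAF=\langle\mathcal A,\rho\rangle$ be a fuzzy argumentation framework, let $E\in\mathcal{AE}(FAF)$ be an admissible set, and let $(A,a)$ be a fuzzy argument with $(A,a)\in F_{FAF}(E)$, i.e. $(A,a)$ is weakening defended by $E$. Write $S=SCC_{FAF}(A)$. Then: (i) $(A,a)\in D_{FAF}(S,E)$; (ii) $(A,a)$ is weakening defended by $E\cap S$ in the fuzzy argumentation framework $FAF\downarrow_{R_{FAF}(S,E)}$, i.e. $(A,a)\in F_{FAF\downarrow_{R_{FAF}(S,E)}}(E\cap S)$.
   Context: Fuzzy sets: a fuzzy set on a crisp set $X$ is a map $S:X\to[0,1]$; $S\subseteq S'$ means $S(x)\le S'(x)$ for all $x$; $(S\cap S')(x)=\min\{S(x),S'(x)\}$, $(S\cup S')(x)=\max\{S(x),S'(x)\}$; $\mathrm{Supp}(S)=\{x:S(x)>0\}$. A fuzzy point $(x,a)$, $a\in(0,1]$, is the fuzzy set with value $a$ at $x$ and $0$ elsewhere; we write $(x,a)\in S$ when $a\le S(x)$. We write $a*b=\min\{a,b\}$ (Gödel t-norm). A fuzzy argumentation framework (FAF) is $\langle\mathcal A,\rho\rangle$ where $\mathrm{Args}$ is a crisp set, $\mathcal A$ is a fuzzy set on $\mathrm{Args}$ (the fuzzy set of arguments, whose support is the set of arguments of the framework) and $\rho:\mathrm{Args}\times\mathrm{Args}\to[0,1]$ is the fuzzy set of attacks, $\rho_{AB}=\rho(A,B)$; $A$ attacks $B$ iff $\rho_{AB}>0$. A fuzzy argument of the framework is a fuzzy point $(A,a)\in\mathcal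 A$. An attack of $(A,a)$ on $(B,b)$ is tolerable if $\min\{a,\rho_{AB}\}+b\le 1$ and sufficient otherwise. $(A,a)$ weakens $(B,b)$ to $(B,b')$ where $b'=\min\{1-\min\{a,\rho_{AB}\},b\}$. A fuzzy set $T\subseteq\mathcal A$ weakening defends a fuzzy argument $(C,c)$ (equivalently, $(C,c)$ is acceptable w.r.t. $T$) if for every fuzzy argument $(B,b)\in\mathcal A$ that sufficiently attacks $(C,c)$ there is $(A',a')\in T$ that weakens $(B,b)$ to some $(B,b')$ which tolerably attacks $(C,c)$. $F_{FAF}(T)$ is the union of all fuzzy arguments weakening defended by $T$. $T$ is conflict-free if there are no $(A,a),(B,b)\in T$ with $(A,a)$ sufficiently attacking $(B,b)$; $T$ is admissible if it is conflict-free and weakening defends every $(A,a)\in T$. $\mathcal{AE}(FAF)$ is the set of admissible sets. Strongly connected components: two arguments $A,B\in\mathrm{Args}$ are path-equivalent if $A=B$ or there is a chain of attacks from $A$ to $B$ and one from $B$ to $A$. For $A\in\mathrm{Args}$, $SCC_{FAF}(A)$ is the fuzzy set with value $\mathcal A(B)$ at each $B$ path-equivalent to $A$ and $0$ elsewhere; $SCCS_{FAF}$ is the set of these. For a fuzzy set $S$, $outparents_{FAF}(S)$ is the fuzzy set of fuzzy arguments $(B,\mathcal A(B))$ with $B\notin\mathrm{Supp}(S)$ and $B$ attacking some argument in $\mathrm{Supp}(S)$. For $T\subseteq\mathcal A$, the restriction $FAF\downarrow_T=\langle T,\rho|_{\mathrm{Supp}(T)\times\mathrm{Supp}(T)}\rangle$;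 weakening defence, admissibility etc. in $FAF\downarrow_T$ refer to the fuzzy arguments and attacks of that framework. For $E\subseteq\mathcal A$ and $S\in SCCS_{FAF}$: $L_{FAF}(S,E)(A)=\max_{B}\big((E\cap outparents_{FAF}(S))(B)*\rho_{BA}\big)$ for $A\in\mathrm{Supp}(S)$ (and $0$ elsewhere); $R_{FAF}(S,E)(A)=\min\{\mathcal A(A),1-L_{FAF}(S,E)(A)\}$ for $A\in\mathrm{Supp}(S)$ (and $0$ elsewhere); $D_{FAF}(S,E)$ is the union of all fuzzy points $(A,a)\in R_{FAF}(S,E)$ such that for every $(B,b)\in outparents_{FAF}(S)$ that sufficiently attacks $(A,a)$ there is $(C,c)\in E$ that weakens $(B,b)$ to some $(B,b')$ which tolerably attacks $(A,a)$. *)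

theory Defs
  imports Main "HOL.Real"
begin

text \<open>Fuzzy sets on a crisp universe (the type 'a plays the role of Args) are maps to real
  numbers; well-formedness (values in [0,1]) is imposed by the predicate fuzzy_set.\<close>

definition fuzzy_set :: "('a \<Rightarrow> real) \<Rightarrow> bool" where
  "fuzzy_set S \<longleftrightarrow> (\<forall>x. 0 \<le> S x \<and> S x \<le> 1)"

definition FAF :: "('a \<Rightarrow> real) \<Rightarrow> ('a \<Rightarrow> 'a \<Rightarrow> real) \<Rightarrow> bool" where
  "FAF Ar rho \<longleftrightarrow> fuzzy_set Ar \<and> (\<forall>x y. 0 \<le> rho x y \<and> rho x y \<le> 1)"

definition fsubset :: "('a \<Rightarrow> real) \<Rightarrow> ('a \<Rightarrow> real) \<Rightarrow> bool" where
  "fsubset S T \<longleftrightarrow> (\<forall>x. S x \<le> T x)"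

definition finter :: "('a \<Rightarrow> real) \<Rightarrow> ('a \<Rightarrow> real) \<Rightarrow> 'a \<Rightarrow> real" where
  "finter S T = (\<lambda>x. min (S x) (T x))"

definition Supp :: "('a \<Rightarrow> real) \<Rightarrow> 'a set" where
  "Supp S = {x. 0 < S x}"

definition fpt_in :: "'a \<Rightarrow> real \<Rightarrow> ('a \<Rightarrow> real) \<Rightarrow> bool" where
  "fpt_in x a S \<longleftrightarrow> 0 < a \<and> a \<le> 1 \<and> a \<le> S x"

definition fpoints_union :: "('a \<Rightarrow> real \<Rightarrow> bool) \<Rightarrow> 'a \<Rightarrow> real" where
  "fpoints_union P = (\<lambda>x. Sup ({0} \<union> {a. P x a}))"

definition sufficient :: "('a \<Rightarrow> 'a \<Rightarrow> real) \<Rightarrow> 'a \<Rightarrow> real \<Rightarrow> 'a \<Rightarrow> real \<Rightarrow> bool" where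
  "sufficient rho A a B b \<longleftrightarrow> min a (rho A B) + b > 1"

definition tolerable :: "('a \<Rightarrow> 'a \<Rightarrow> real) \<Rightarrow> 'a \<Rightarrow> real \<Rightarrow> 'a \<Rightarrow> real \<Rightarrow> bool" where
  "tolerable rho A a B b \<longleftrightarrow> min a (rho A B) + b \<le> 1"

text \<open>(A,a) weakens (B,b) to (B, weakened rho A a B b)\<close>
definition weakened :: "('a \<Rightarrow> 'a \<Rightarrow> real) \<Rightarrow> 'a \<Rightarrow> real \<Rightarrow> 'a \<Rightarrow> real \<Rightarrow> real" where
  "weakened rho A a B b = min (1 - min a (rho A B)) b"

definition wdefends :: "('a \<Rightarrow> real) \<Rightarrow> ('a \<Rightarrow> 'a \<Rightarrow> real) \<Rightarrow> ('a \<Rightarrow> real) \<Rightarrow> 'a \<Rightarrow> real \<Rightarrow> bool" where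
  "wdefends Ar rho T C c \<longleftrightarrow>
     (\<forall>B b. fpt_in B b Ar \<and> sufficient rho B b C c \<longrightarrow>
        (\<exists>A' a'. fpt_in A' a' T \<and> tolerable rho B (weakened rho A' a' B b) C c))"

definition F_FAF :: "('a \<Rightarrow> real) \<Rightarrow> ('a \<Rightarrow> 'a \<Rightarrow> real) \<Rightarrow> ('a \<Rightarrow> real) \<Rightarrow> 'a \<Rightarrow> real" where
  "F_FAF Ar rho T = fpoints_union (\<lambda>x c. fpt_in x c Ar \<and> wdefends Ar rho T x c)"

definition conflict_free :: "('a \<Rightarrow> 'a \<Rightarrow> real) \<Rightarrow> ('a \<Rightarrow> real) \<Rightarrow> bool" where
  "conflict_free rho T \<longleftrightarrow>
     \<not> (\<exists>A a B b. fpt_in A a T \<and> fpt_in B b T \<and> sufficient rho A a B b)"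

definition admissible :: "('a \<Rightarrow> real) \<Rightarrow> ('a \<Rightarrow> 'a \<Rightarrow> real) \<Rightarrow> ('a \<Rightarrow> real) \<Rightarrow> bool" where
  "admissible Ar rho T \<longleftrightarrow> fsubset T Ar \<and> conflict_free rho T \<and>
     (\<forall>A a. fpt_in A a T \<longrightarrow> wdefends Ar rho T A a)"

definition AE :: "('a \<Rightarrow> real) \<Rightarrow> ('a \<Rightarrow> 'a \<Rightarrow> real) \<Rightarrow> ('a \<Rightarrow> real) set" where
  "AE Ar rho = {T. admissible Ar rho T}"

definition path_equiv :: "('a \<Rightarrow> 'a \<Rightarrow> real) \<Rightarrow> 'a \<Rightarrow> 'a \<Rightarrow> bool" where
  "path_equiv rho A B \<longleftrightarrow> A = B \<or>
     ((\<lambda>x y. 0 < rho x y)\<^sup>+\<^sup>+ A B \<and> (\<lambda>x y. 0 < rho x y)\<^sup>+\<^sup>+ B A)"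

definition SCC :: "('a \<Rightarrow> real) \<Rightarrow> ('a \<Rightarrow> 'a \<Rightarrow> real) \<Rightarrow> 'a \<Rightarrow> 'a \<Rightarrow> real" where
  "SCC Ar rho A = (\<lambda>B. if path_equiv rho A B then Ar B else 0)"

definition outparents :: "('a \<Rightarrow> real) \<Rightarrow> ('a \<Rightarrow> 'a \<Rightarrow> real) \<Rightarrow> ('a \<Rightarrow> real) \<Rightarrow> 'a \<Rightarrow> real" where
  "outparents Ar rho S = (\<lambda>B. if B \<notin> Supp S \<and> (\<exists>C\<in>Supp S. 0 < rho B C) then Ar B else 0)"

definition L_FAF :: "('a \<Rightarrow> real) \<Rightarrow> ('a \<Rightarrow> 'a \<Rightarrow> real) \<Rightarrow> ('a \<Rightarrow> real) \<Rightarrow> ('a \<Rightarrow> real) \<Rightarrow> 'a \<Rightarrow> real" where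
  "L_FAF Ar rho S E = (\<lambda>A. if A \<in> Supp S
      then Sup ({0} \<union> range (\<lambda>B. min (finter E (outparents Ar rho S) B) (rho B A)))
      else 0)"

definition R_FAF :: "('a \<Rightarrow> real) \<Rightarrow> ('a \<Rightarrow> 'a \<Rightarrow> real) \<Rightarrow> ('a \<Rightarrow> real) \<Rightarrow> ('a \<Rightarrow> real) \<Rightarrow> 'a \<Rightarrow> real" where
  "R_FAF Ar rho S E = (\<lambda>A. if A \<in> Supp S then min (Ar A) (1 - L_FAF Ar rho S E A) else 0)"

definition D_FAF :: "('a \<Rightarrow> real) \<Rightarrow> ('a \<Rightarrow> 'a \<Rightarrow> real) \<Rightarrow> ('a \<Rightarrow> real) \<Rightarrow> ('a \<Rightarrow> real) \<Rightarrow> 'a \<Rightarrow> real" where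
  "D_FAF Ar rho S E = fpoints_union (\<lambda>x a. fpt_in x a (R_FAF Ar rho S E) \<and>
      (\<forall>B b. fpt_in B b (outparents Ar rho S) \<and> sufficient rho B b x a \<longrightarrow>
         (\<exists>C c. fpt_in C c E \<and> tolerable rho B (weakened rho C c B b) x a)))"

text \<open>attack relation of the restriction FAF restricted to T: rho on Supp T x Supp T\<close>
definition restrict_att :: "('a \<Rightarrow> 'a \<Rightarrow> real) \<Rightarrow> ('a \<Rightarrow> real) \<Rightarrow> 'a \<Rightarrow> 'a \<Rightarrow> real" where
  "restrict_att rho T = (\<lambda>x y. if x \<in> Supp T \<and> y \<in> Supp T then rho x y else 0)"

end

theory Submission
  imports Defs
begin

text \<open>An attack by a member of the admissible set E on an argument (X,x) weakening defended
  by E is tolerable: otherwise the defender would sufficiently attack that member of E,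
  contradicting conflict-freeness. This bounds L(S,E)(X) by 1 - x, so every such argument,
  in particular every member of E, survives in R(S,E). For (ii), a defender (A',a') of (A,a)
  against an attacker (B,b) of the restricted framework must itself lie in S: an effective
  weakening needs min a' (rho A' B) > 1 - b \<ge> L(S,E)(B), while an outparent of S in E
  contributes at most L(S,E)(B) to that value.\<close>

lemma fpt_in_fpoints_union:
  assumes "P x a" "0 < a" "a \<le> 1" "\<And>b. P x b \<Longrightarrow> b \<le> 1"
  shows "fpt_in x a (fpoints_union P)"
proof -
  have "a \<le> Sup ({0} \<union> {a. P x a})"
    using assms by (intro cSup_upper) (auto intro!: bdd_aboveI[of _ 1])
  then show ?thesis
    using assms(2,3) unfolding fpt_in_def fpoints_union_def by simp
qed

lemma fpt_in_F_FAF: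
  assumes "fpt_in A a Ar" "wdefends Ar rho T A a"
  shows "fpt_in A a (F_FAF Ar rho T)"
  unfolding F_FAF_def
  using assms by (intro fpt_in_fpoints_union) (auto simp: fpt_in_def)

lemma weakening_effective:
  assumes "sufficient rho B b C c" "tolerable rho B (weakened rho A a B b) C c"
  shows "1 - b < min a (rho A B)"
proof (rule ccontr)
  assume "\<not> ?thesis"
  then have "weakened rho A a B b = b"
    unfolding weakened_def by linarith
  with assms show False
    unfolding sufficient_def tolerable_def by simp
qed

lemma admissible_attack_on_defended_tolerable:
  assumes F: "FAF Ar rho" and adm: "admissible Ar rho E"
    and wd: "wdefends Ar rho E X x" and "x \<le> 1"
  shows "min (E B) (rho B X) \<le> 1 - x"
proof (rule ccontr)
  assume "\<not> ?thesis"
  then have suff: "sufficient rho B (E B) X x"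
    unfolding sufficient_def by simp
  have "E B \<le> Ar B" "Ar B \<le> 1"
    using adm F unfolding admissible_def fsubset_def FAF_def fuzzy_set_def by auto
  with \<open>\<not> ?thesis\<close> \<open>x \<le> 1\<close> have B: "fpt_in B (E B) Ar" "fpt_in B (E B) E"
    unfolding fpt_in_def by auto
  then obtain A' a' where A': "fpt_in A' a' E"
    and "tolerable rho B (weakened rho A' a' B (E B)) X x"
    using wd suff unfolding wdefends_def by blast
  with suff have "sufficient rho A' a' B (E B)"
    using weakening_effective unfolding sufficient_def by fastforce
  then show False
    using adm A' B unfolding admissible_def conflict_free_def by blast
qed

lemma L_FAF_le_of_wdefends:
  assumes "FAF Ar rho" "admissible Ar rho E" "wdefends Ar rho E X x" "x \<le> 1"
  shows "L_FAF Ar rho S E X \<le> 1 - x"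
proof -
  have "Sup ({0} \<union> range (\<lambda>B. min (finter E (outparents Ar rho S) B) (rho B X))) \<le> 1 - x"
  proof (rule cSup_least)
    fix v assume "v \<in> {0} \<union> range (\<lambda>B. min (finter E (outparents Ar rho S) B) (rho B X))"
    then obtain B where "v = 0 \<or> v = min (min (E B) (outparents Ar rho S B)) (rho B X)"
      unfolding finter_def by auto
    then show "v \<le> 1 - x"
      using admissible_attack_on_defended_tolerable[OF assms, of B] \<open>x \<le> 1\<close> by auto
  qed simp
  then show ?thesis
    using \<open>x \<le> 1\<close> unfolding L_FAF_def by simp
qed

lemma bdd_above_L_FAF_values:
  assumes "FAF Ar rho"
  shows "bdd_above ({0} \<union> range (\<lambda>B. min (finter E (outparents Ar rho S) B) (rho B X)))"
  using assms unfolding FAF_def by (intro bdd_aboveI[of _ 1]) (auto simp: min.coboundedI2)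

lemma L_FAF_ge:
  assumes "FAF Ar rho" "X \<in> Supp S"
  shows "min (finter E (outparents Ar rho S) B) (rho B X) \<le> L_FAF Ar rho S E X"
  using cSup_upper[OF _ bdd_above_L_FAF_values[OF assms(1)]] assms(2)
  unfolding L_FAF_def by simp

lemma L_FAF_nonneg:
  assumes "FAF Ar rho"
  shows "0 \<le> L_FAF Ar rho S E X"
  using cSup_upper[OF _ bdd_above_L_FAF_values[OF assms]]
  unfolding L_FAF_def by simp

lemma fpt_in_R_FAF:
  assumes "FAF Ar rho" "admissible Ar rho E" "fpt_in X x Ar" "wdefends Ar rho E X x"
    and "X \<in> Supp S"
  shows "fpt_in X x (R_FAF Ar rho S E)"
  using L_FAF_le_of_wdefends[OF assms(1,2,4), of S] assms(3,5)
  unfolding R_FAF_def fpt_in_def by auto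

lemma fpt_in_outparents_imp_fpt_in:
  "fpt_in B b (outparents Ar rho S) \<Longrightarrow> fpt_in B b Ar"
  unfolding fpt_in_def outparents_def by (auto split: if_splits)

lemma fpt_in_D_FAF_of_wdefends:
  assumes "FAF Ar rho" "admissible Ar rho E" "fpt_in A a Ar" "wdefends Ar rho E A a"
    and "A \<in> Supp S"
  shows "fpt_in A a (D_FAF Ar rho S E)"
  unfolding D_FAF_def
proof (rule fpt_in_fpoints_union)
  show "fpt_in A a (R_FAF Ar rho S E) \<and>
      (\<forall>B b. fpt_in B b (outparents Ar rho S) \<and> sufficient rho B b A a \<longrightarrow>
         (\<exists>C c. fpt_in C c E \<and> tolerable rho B (weakened rho C c B b) A a))"
    using fpt_in_R_FAF[OF assms] assms(4)
    unfolding wdefends_def by (blast dest: fpt_in_outparents_imp_fpt_in)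
qed (use assms(3) in \<open>auto simp: fpt_in_def\<close>)

lemma weakening_defender_in_Supp:
  assumes F: "FAF Ar rho" and adm: "admissible Ar rho E"
    and B: "B \<in> Supp S" "b \<le> 1 - L_FAF Ar rho S E B"
    and A': "fpt_in A' a' E"
    and suff: "sufficient rho B b C c"
    and tol: "tolerable rho B (weakened rho A' a' B b) C c"
  shows "A' \<in> Supp S"
proof (rule ccontr)
  assume out: "A' \<notin> Supp S"
  have eff: "L_FAF Ar rho S E B < min a' (rho A' B)"
    using weakening_effective[OF suff tol] B(2) by simp
  then have "0 < rho A' B"
    using L_FAF_nonneg[OF F, of S E B] by simp
  then have "outparents Ar rho S A' = Ar A'"
    using out B(1) unfolding outparents_def by auto
  moreover have "a' \<le> E A'" "E A' \<le> Ar A'"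
    using A' adm unfolding fpt_in_def admissible_def fsubset_def by auto
  ultimately have "min a' (rho A' B) \<le> min (finter E (outparents Ar rho S) A') (rho A' B)"
    unfolding finter_def by auto
  with L_FAF_ge[OF F B(1), of E A'] eff show False
    by simp
qed

lemma wdefends_restriction_R_FAF:
  fixes Ar S E :: "'a \<Rightarrow> real" and rho :: "'a \<Rightarrow> 'a \<Rightarrow> real"
  defines "R \<equiv> R_FAF Ar rho S E"
  assumes F: "FAF Ar rho" and adm: "admissible Ar rho E"
    and wd: "wdefends Ar rho E A a" and "a \<le> 1"
    and S: "\<And>x. x \<in> Supp S \<Longrightarrow> S x = Ar x"
  shows "wdefends R (restrict_att rho R) (finter E S) A a"
  unfolding wdefends_def
proof (intro allI impI, elim conjE)
  fix B b
  assume B: "fpt_in B b R" and suffR: "sufficient (restrict_att rho R) B b A a"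
  have BS: "B \<in> Supp S" and b: "fpt_in B b Ar" "b \<le> 1 - L_FAF Ar rho S E B"
    using B unfolding fpt_in_def R_def R_FAF_def by (auto split: if_splits)
  have BA: "B \<in> Supp R" "A \<in> Supp R"
    using suffR B \<open>a \<le> 1\<close> unfolding sufficient_def restrict_att_def fpt_in_def Supp_def
    by (auto split: if_splits)
  with suffR have suff: "sufficient rho B b A a"
    unfolding sufficient_def restrict_att_def by simp
  then obtain A' a' where A': "fpt_in A' a' E"
    and tol: "tolerable rho B (weakened rho A' a' B b) A a"
    using wd b(1) unfolding wdefends_def by blast
  have A'S: "A' \<in> Supp S"
    using weakening_defender_in_Supp[OF F adm BS b(2) A' suff tol] .
  have "fpt_in A' a' Ar" "wdefends Ar rho E A' a'"
    using adm A' unfolding admissible_def fsubset_def fpt_in_def by (auto intro: order_trans)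
  then have "A' \<in> Supp R"
    using fpt_in_R_FAF[OF F adm _ _ A'S] unfolding R_def fpt_in_def Supp_def by fastforce
  with BA tol have "tolerable (restrict_att rho R) B (weakened (restrict_att rho R) A' a' B b) A a"
    unfolding tolerable_def weakened_def restrict_att_def by simp
  moreover have "fpt_in A' a' (finter E S)"
    using A' S[OF A'S] adm unfolding fpt_in_def finter_def admissible_def fsubset_def by auto
  ultimately show "\<exists>A' a'. fpt_in A' a' (finter E S) \<and>
      tolerable (restrict_att rho R) B (weakened (restrict_att rho R) A' a' B b) A a"
    by blast
qed

lemma SCC_self_in_Supp: "0 < Ar A \<Longrightarrow> A \<in> Supp (SCC Ar rho A)"
  unfolding SCC_def Supp_def path_equiv_def by simp

lemma SCC_eq_on_Supp: "B \<in> Supp (SCC Ar rho A) \<Longrightarrow> SCC Ar rho A B = Ar B"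
  unfolding SCC_def Supp_def by (auto split: if_splits)

theorem mainTheorem1:
  fixes Ar :: "'a \<Rightarrow> real" and rho :: "'a \<Rightarrow> 'a \<Rightarrow> real"
    and E :: "'a \<Rightarrow> real" and A :: 'a and a :: real
  assumes "FAF Ar rho"
    and "E \<in> AE Ar rho"
    and "fpt_in A a Ar"
    and "wdefends Ar rho E A a"
  shows "fpt_in A a (D_FAF Ar rho (SCC Ar rho A) E)
     \<and> wdefends (R_FAF Ar rho (SCC Ar rho A) E)
          (restrict_att rho (R_FAF Ar rho (SCC Ar rho A) E))
          (finter E (SCC Ar rho A)) A a
     \<and> fpt_in A a (F_FAF (R_FAF Ar rho (SCC Ar rho A) E)
          (restrict_att rho (R_FAF Ar rho (SCC Ar rho A) E))
          (finter E (SCC Ar rho A)))"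
proof -
  have adm: "admissible Ar rho E"
    using assms(2) unfolding AE_def by simp
  have a_le_1: "a \<le> 1"
    using assms(3) unfolding fpt_in_def by simp
  have A_in_SCC: "A \<in> Supp (SCC Ar rho A)"
    using assms(3) by (intro SCC_self_in_Supp) (auto simp: fpt_in_def)
  have defended: "wdefends (R_FAF Ar rho (SCC Ar rho A) E)
      (restrict_att rho (R_FAF Ar rho (SCC Ar rho A) E)) (finter E (SCC Ar rho A)) A a"
    using wdefends_restriction_R_FAF[OF assms(1) adm assms(4) a_le_1 SCC_eq_on_Supp[of _ Ar rho A]] .
  have "fpt_in A a (R_FAF Ar rho (SCC Ar rho A) E)"
    using fpt_in_R_FAF[OF assms(1) adm assms(3,4) A_in_SCC] .
  with defended show ?thesis
    using fpt_in_D_FAF_of_wdefends[OF assms(1) adm assms(3,4) A_in_SCC] fpt_in_F_FAF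
    by simp
qed

end
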